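(* Let $\lambda\in\mathbb{R}$ and $f(x)=\lfloor \lambda x\rfloor$ for $x\in\mathbb{R}$. Let $\mathrm{Fix}(f)=\{x\in\mathbb{R}: f(x)=x\}$. Then: 1) If $\lambda\le 0$, then $\mathrm{Fix}(f)=\{0\}$. 2) If $\frac{m-1}{m}<\lambda\le\frac{m}{m+1}$ for some $m\in\mathbb{N}=\{1,2,\dots\}$, then $\mathrm{Fix}(f)=\{0,-1,-2,\dots,-m\}$. 3) If $\lambda=1$, then $\mathrm{Fix}(f)=\mathbb{Z}$. 4) If $\frac{m+1}{m}\le\lambda<\frac{m}{m-1}$ for some $m\in\mathbb{N}$ (for $m=1$ this condition is read as $2\le\lambda<+\infty$), then $\mathrm{Fix}(f)=\{0,1,2,\dots,m-1\}$.
   Context: $\lfloor x\rfloor=\max\{m\in\mathbb{Z}: m\le x\}$ denotes the floor function. Note that the intervals $\left(\frac{m-1}{m},\frac{m}{m+1}\right]$, $m\in\mathbb{N}$, partition $(0,1)$, and the intervals $\left[\frac{m+1}{m},\frac{m}{m-1}\right)$, $m\in\mathbb{N}$ (with the $m=1$ interval being $[2,+\infty)$), partition $(1,+\infty)$. *)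

theory Defs
  imports Complex_Main
begin

definition Fix :: "(real \<Rightarrow> real) \<Rightarrow> real set" where
  "Fix f = {x. f x = x}"

end

theory Submission
  imports Defs
begin

text \<open>
  A fixed point x of \<lfloor>l x\<rfloor> is an integer with 0 \<le> (l - 1) x < 1. For l \<noteq> 1 this says that
  x = \<plusminus>k, with the sign of l - 1, for a natural number k with k \<bar>l - 1\<bar> < 1; in each
  of the intervals of the statement, \<bar>l - 1\<bar> lies between 1/(n + 1) and 1/n for the
  appropriate n, which singles out exactly k = 0, \<dots>, n.
\<close>

lemma mem_Fix_floor_scale_iff:
  "x \<in> Fix (\<lambda>x. real_of_int \<lfloor>l * x\<rfloor>) \<longleftrightarrow> x \<in> \<int> \<and> 0 \<le> (l - 1) * x \<and> (l - 1) * x < 1"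
proof
  assume "x \<in> Fix (\<lambda>x. real_of_int \<lfloor>l * x\<rfloor>)"
  then have x: "x = of_int \<lfloor>l * x\<rfloor>"
    by (simp add: Fix_def)
  then have "x \<in> \<int>"
    by (metis Ints_of_int)
  moreover have "x \<le> l * x" "l * x < x + 1"
    using x floor_correct[of "l * x"] by linarith+
  ultimately show "x \<in> \<int> \<and> 0 \<le> (l - 1) * x \<and> (l - 1) * x < 1"
    by (simp add: algebra_simps)
next
  assume "x \<in> \<int> \<and> 0 \<le> (l - 1) * x \<and> (l - 1) * x < 1"
  then obtain n where "x = of_int n" "of_int n \<le> l * x" "l * x < of_int n + 1"
    by (auto elim: Ints_cases simp: algebra_simps)
  then show "x \<in> Fix (\<lambda>x. real_of_int \<lfloor>l * x\<rfloor>)"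
    by (simp add: Fix_def floor_eq_iff)
qed

lemma Fix_floor_scale_less_one:
  assumes "l < 1"
  shows "Fix (\<lambda>x. real_of_int \<lfloor>l * x\<rfloor>) = {x. \<exists>k::nat. real k * (1 - l) < 1 \<and> x = - real k}"
proof (intro set_eqI iffI)
  fix x
  assume "x \<in> Fix (\<lambda>x. real_of_int \<lfloor>l * x\<rfloor>)"
  then have "x \<in> \<int>" "0 \<le> (l - 1) * x" "(l - 1) * x < 1"
    by (simp_all add: mem_Fix_floor_scale_iff)
  moreover from this(2) assms have "x \<le> 0"
    by (simp add: zero_le_mult_iff)
  ultimately obtain n where "x = of_int n" "n \<le> 0" "real_of_int n * (l - 1) < 1"
    by (auto elim: Ints_cases simp: mult.commute)
  then show "x \<in> {x. \<exists>k::nat. real k * (1 - l) < 1 \<and> x = - real k}"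
    by (intro CollectI exI[of _ "nat (- n)"]) (simp add: algebra_simps)
next
  fix x
  assume "x \<in> {x. \<exists>k::nat. real k * (1 - l) < 1 \<and> x = - real k}"
  then obtain k :: nat where "real k * (1 - l) < 1" "x = - real k"
    by blast
  then show "x \<in> Fix (\<lambda>x. real_of_int \<lfloor>l * x\<rfloor>)"
    unfolding mem_Fix_floor_scale_iff
    using assms mult_right_mono[of l 1 "real k"] by (simp add: algebra_simps)
qed

lemma Fix_floor_scale_greater_one:
  assumes "1 < l"
  shows "Fix (\<lambda>x. real_of_int \<lfloor>l * x\<rfloor>) = {x. \<exists>k::nat. real k * (l - 1) < 1 \<and> x = real k}"
proof (intro set_eqI iffI)
  fix x
  assume "x \<in> Fix (\<lambda>x. real_of_int \<lfloor>l * x\<rfloor>)"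
  then have "x \<in> \<int>" "0 \<le> (l - 1) * x" "(l - 1) * x < 1"
    by (simp_all add: mem_Fix_floor_scale_iff)
  moreover from this(2) assms have "0 \<le> x"
    by (simp add: zero_le_mult_iff)
  ultimately obtain n where "x = of_int n" "0 \<le> n" "real_of_int n * (l - 1) < 1"
    by (auto elim: Ints_cases simp: mult.commute)
  then show "x \<in> {x. \<exists>k::nat. real k * (l - 1) < 1 \<and> x = real k}"
    by (intro CollectI exI[of _ "nat n"]) simp
next
  fix x
  assume "x \<in> {x. \<exists>k::nat. real k * (l - 1) < 1 \<and> x = real k}"
  then obtain k :: nat where "real k * (l - 1) < 1" "x = real k"
    by blast
  then show "x \<in> Fix (\<lambda>x. real_of_int \<lfloor>l * x\<rfloor>)"
    unfolding mem_Fix_floor_scale_iff using assms by (simp add: mult.commute)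
qed

lemma Fix_floor_scale_one: "Fix (\<lambda>x. real_of_int \<lfloor>1 * x\<rfloor>) = \<int>"
  unfolding set_eq_iff mem_Fix_floor_scale_iff by simp

lemma of_nat_mult_less_one_iff_le:
  fixes d :: real
  assumes "real n * d < 1" "1 \<le> (real n + 1) * d"
  shows "real k * d < 1 \<longleftrightarrow> k \<le> n"
proof
  have "0 < (real n + 1) * d"
    using assms(2) by linarith
  then have "0 < d"
    by (simp add: zero_less_mult_iff)
  show "k \<le> n" if "real k * d < 1"
  proof (rule ccontr)
    assume "\<not> k \<le> n"
    then have "(real n + 1) * d \<le> real k * d"
      using \<open>0 < d\<close> by (intro mult_right_mono) auto
    with that assms(2) show False
      by linarith
  qed
  show "real k * d < 1" if "k \<le> n"
  proof -
    have "real k * d \<le> real n * d"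
      using that \<open>0 < d\<close> by (intro mult_right_mono) auto
    with assms(1) show ?thesis
      by linarith
  qed
qed

theorem lemma1:
  fixes l :: real
  defines "f \<equiv> (\<lambda>x::real. real_of_int \<lfloor>l * x\<rfloor>)"
  shows "(l \<le> 0 \<longrightarrow> Fix f = {0})
    \<and> (\<forall>m::nat. m \<ge> 1 \<longrightarrow> (real m - 1) / real m < l \<and> l \<le> real m / (real m + 1)
          \<longrightarrow> Fix f = {x. \<exists>k::nat. k \<le> m \<and> x = - real k})
    \<and> (l = 1 \<longrightarrow> Fix f = \<int>)
    \<and> (\<forall>m::nat. m \<ge> 1 \<longrightarrow> (real m + 1) / real m \<le> l
          \<and> (m = 1 \<or> l < real m / (real m - 1))
          \<longrightarrow> Fix f = {x. \<exists>k::nat. k \<le> m - 1 \<and> x = real k})"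
proof (intro conjI allI impI)
  assume "l \<le> 0"
  then have "real k * (1 - l) < 1 \<longleftrightarrow> k \<le> 0" for k
    by (intro of_nat_mult_less_one_iff_le) auto
  with \<open>l \<le> 0\<close> show "Fix f = {0}"
    unfolding f_def by (auto simp: Fix_floor_scale_less_one)
next
  fix m :: nat
  assume "m \<ge> 1" and "(real m - 1) / real m < l \<and> l \<le> real m / (real m + 1)"
  then have "real m * (1 - l) < 1" "1 \<le> (real m + 1) * (1 - l)" "l < 1"
    by (auto simp: field_simps)
  then show "Fix f = {x. \<exists>k::nat. k \<le> m \<and> x = - real k}"
    unfolding f_def by (simp add: Fix_floor_scale_less_one of_nat_mult_less_one_iff_le[of m])
next
  assume "l = 1"
  then show "Fix f = \<int>"
    unfolding f_def using Fix_floor_scale_one by simp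
next
  fix m :: nat
  assume "m \<ge> 1" and l: "(real m + 1) / real m \<le> l \<and> (m = 1 \<or> l < real m / (real m - 1))"
  then have lower: "1 \<le> (real (m - 1) + 1) * (l - 1)"
    by (simp add: field_simps of_nat_diff)
  then have "0 < (real (m - 1) + 1) * (l - 1)"
    by linarith
  then have "1 < l"
    by (simp add: zero_less_mult_iff)
  have upper: "real (m - 1) * (l - 1) < 1"
  proof (cases "m = 1")
    case False
    with \<open>m \<ge> 1\<close> l have "l * (real m - 1) < real m"
      by (simp add: less_divide_eq)
    with \<open>m \<ge> 1\<close> show ?thesis
      by (simp add: of_nat_diff algebra_simps)
  qed simp
  show "Fix f = {x. \<exists>k::nat. k \<le> m - 1 \<and> x = real k}"
    using \<open>1 < l\<close> lower upper unfolding f_def by (simp add: Fix_floor_scale_greater_one of_nat_mult_less_one_iff_le[of "m - 1"])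
qed

end
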